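(* Let $t\ge2$, $n\ge1$, $\lambda$ a partition of length at most $tn+1$ with $t$-quotient $(\lambda^{(0)},\dots,\lambda^{(t-1)})$, and $0\le p,q\le t-1$ with $n_p(\lambda)+n_q(\lambda)=2n+1$. Let $\rho^*_{p,q}$ be the partition of length $2n+1$ obtained by adding $\lambda^{(p)}_1$ to each entry of $(\lambda^{(q)}_1,\dots,\lambda^{(q)}_{n_q(\lambda)},-\lambda^{(p)}_{n_p(\lambda)},\dots,-\lambda^{(p)}_1)$. Then \[s_{\rho^*_{p,q}}(X^t,\overline{X}^t,y^t)=\frac{(-1)^{\frac{n_p(\lambda)(n_p(\lambda)-1)}{2}}\,y^{t(\lambda^{(p)}_1+n_p(\lambda))}}{V(X^t,\overline{X}^t,y^t)}\det\begin{pmatrix}A^\lambda_{q,-q}&\overline{A}^\lambda_{p,t-p}\\ \overline{A}^\lambda_{q,-q}&A^\lambda_{p,t-p}\\ B^\lambda_{q,-q}&\overline{B}^\lambda_{p,t-p}\end{pmatrix},\] where $V(X^t,\overline{X}^t,y^t)=\prod_{1\le i<j\le n}(x_i^t-x_j^t)(x_i^t-\bar x_j^t)(x_j^t-\bar x_i^t)(\bar x_i^t-\bar x_j^t)\prod_{i=1}^n(x_i^t-y^t)(x_i^t-\bar x_i^t)(\bar x_i^t-y^t)$.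
   Context: $X=(x_1,\dots,x_n)$, $y$ indeterminates, $\bar x=1/x$, $\bar y=1/y$; $(X^t,\overline{X}^t,y^t)$ denotes the $2n+1$ variables $x_1^t,\dots,x_n^t,\bar x_1^t,\dots,\bar x_n^t,y^t$. $s_\mu(z_1,\dots,z_N)=\det(z_i^{\mu_j+N-j})/\det(z_i^{N-j})$. Beta-set $\beta_i(\lambda)=\lambda_i+tn+1-i$ ($1\le i\le tn+1$); $n_r(\lambda)$ is the number of entries congruent to $r$ mod $t$, and $\beta^{(r)}_1(\lambda)>\dots>\beta^{(r)}_{n_r(\lambda)}(\lambda)$ are those entries. $t$-quotient: writing $\beta^{(r)}_j(\lambda)=tb_j+r$, $\lambda^{(r)}=(b_j-n_r(\lambda)+j)_{j=1}^{n_r(\lambda)}$. For an integer $c$: $A^\lambda_{r,c}=(x_i^{\beta^{(r)}_j(\lambda)+c})$ and $\overline{A}^\lambda_{r,c}=(\bar x_i^{\beta^{(r)}_j(\lambda)+c})$ are $n\times n_r(\lambda)$ matrices ($1\le i\le n$, $1\le j\le n_r(\lambda)$); $B^\lambda_{r,c}=(y^{\beta^{(r)}_j(\lambda)+c})_j$ and $\overline{B}^\lambda_{r,c}=(\bar y^{\beta^{(r)}_j(\lambda)+c})_j$ are $1\times n_r(\lambda)$ row vectors. The displayed matrix is $(2n+1)\times(2n+1)$ in block form. *)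

theory Defs
  imports "Jordan_Normal_Form.Determinant"
begin

(* Partitions lam :: nat => nat are 1-indexed: lam 1 >= lam 2 >= ... ; lam 0 is unused. *)

definition beta :: "nat \<Rightarrow> nat \<Rightarrow> (nat \<Rightarrow> nat) \<Rightarrow> nat \<Rightarrow> nat" where
  "beta t n lam i = lam i + t * n + 1 - i"

text \<open>The entries of the beta-set congruent to r mod t, in decreasing order
  (the beta-set is strictly decreasing in i).\<close>
definition betas :: "nat \<Rightarrow> nat \<Rightarrow> (nat \<Rightarrow> nat) \<Rightarrow> nat \<Rightarrow> nat list" where
  "betas t n lam r = filter (\<lambda>b. b mod t = r) (map (beta t n lam) [1..<t * n + 2])"

definition nr :: "nat \<Rightarrow> nat \<Rightarrow> (nat \<Rightarrow> nat) \<Rightarrow> nat \<Rightarrow> nat" where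
  "nr t n lam r = length (betas t n lam r)"

definition betar :: "nat \<Rightarrow> nat \<Rightarrow> (nat \<Rightarrow> nat) \<Rightarrow> nat \<Rightarrow> nat \<Rightarrow> nat" where
  "betar t n lam r j = betas t n lam r ! (j - 1)"

text \<open>t-quotient component lam^(r)_j = b_j - n_r(lam) + j where beta^(r)_j = t b_j + r;
  entries with index outside 1..n_r(lam) are 0 (usual padding of partitions).\<close>
definition tquot :: "nat \<Rightarrow> nat \<Rightarrow> (nat \<Rightarrow> nat) \<Rightarrow> nat \<Rightarrow> nat \<Rightarrow> int" where
  "tquot t n lam r j =
     (if 1 \<le> j \<and> j \<le> nr t n lam r
      then int (betar t n lam r j div t) - int (nr t n lam r) + int j else 0)"

definition rho_star :: "nat \<Rightarrow> nat \<Rightarrow> (nat \<Rightarrow> nat) \<Rightarrow> nat \<Rightarrow> nat \<Rightarrow> nat \<Rightarrow> int" where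
  "rho_star t n lam p q k =
     tquot t n lam p 1 +
     (if k \<le> nr t n lam q then tquot t n lam q k
      else - tquot t n lam p (nr t n lam p + nr t n lam q + 1 - k))"

text \<open>Schur function s_mu(z_1,...,z_N) = det(z_i^(mu_j+N-j)) / det(z_i^(N-j));
  mu is 1-indexed, z is 0-indexed (z_i = z (i-1)).\<close>
definition schur :: "nat \<Rightarrow> (nat \<Rightarrow> int) \<Rightarrow> (nat \<Rightarrow> 'a::field) \<Rightarrow> 'a" where
  "schur N mu z =
     det (mat N N (\<lambda>(i, j). z i powi (mu (j + 1) + int N - int (j + 1))))
     / det (mat N N (\<lambda>(i, j). z i ^ (N - (j + 1))))"

text \<open>The 2n+1 variables (X^t, Xbar^t, y^t), 0-indexed; x is 1-indexed (x_1..x_n).\<close>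
definition vars_t :: "nat \<Rightarrow> nat \<Rightarrow> (nat \<Rightarrow> 'a::field) \<Rightarrow> 'a \<Rightarrow> nat \<Rightarrow> 'a" where
  "vars_t t n x y i =
     (if i < n then x (i + 1) ^ t
      else if i < 2 * n then inverse (x (i - n + 1)) ^ t
      else y ^ t)"

definition Vprod :: "nat \<Rightarrow> nat \<Rightarrow> (nat \<Rightarrow> 'a::field) \<Rightarrow> 'a \<Rightarrow> 'a" where
  "Vprod t n x y =
     (\<Prod>i\<in>{1..n}. \<Prod>j\<in>{i+1..n}.
        (x i ^ t - x j ^ t) * (x i ^ t - inverse (x j) ^ t)
        * (x j ^ t - inverse (x i) ^ t) * (inverse (x i) ^ t - inverse (x j) ^ t))
   * (\<Prod>i\<in>{1..n}. (x i ^ t - y ^ t) * (x i ^ t - inverse (x i) ^ t) * (inverse (x i) ^ t - y ^ t))"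

text \<open>The (2n+1) x (2n+1) block matrix
  [A_{q,-q}, Abar_{p,t-p}; Abar_{q,-q}, A_{p,t-p}; B_{q,-q}, Bbar_{p,t-p}], 0-indexed.\<close>
definition block_mat :: "nat \<Rightarrow> nat \<Rightarrow> (nat \<Rightarrow> nat) \<Rightarrow> nat \<Rightarrow> nat \<Rightarrow> (nat \<Rightarrow> 'a::field) \<Rightarrow> 'a \<Rightarrow> 'a mat" where
  "block_mat t n lam p q x y =
     mat (2 * n + 1) (2 * n + 1) (\<lambda>(i, j).
       let w = (if i < n then x (i + 1) else if i < 2 * n then inverse (x (i - n + 1)) else y)
       in if j < nr t n lam q
          then w powi (int (betar t n lam q (j + 1)) - int q)
          else inverse w powi (int (betar t n lam p (j - nr t n lam q + 1)) + int t - int p))"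

end

theory Submission
  imports Defs
begin

(* Write w_i for the row variables x_i, 1/x_i, y, so that the Schur variables are w_i^t.
   Since every beta^(r)_j is congruent to r mod t, the exponent t (rho*_j + N - j) of the
   Schur numerator equals t (lam^(p)_1 + n_p) plus the exponent beta^(q)_j - q of the
   block matrix in the first n_q columns, and minus the exponent beta^(p)_k + t - p in the
   remaining columns, taken in reverse order. Hence the numerator is the block
   determinant with its last n_p columns reversed (the sign), each row scaled by
   w_i^(t (lam^(p)_1 + n_p)); the factors of x_i and 1/x_i cancel, leaving the power of y.
   The denominator is a Vandermonde determinant whose factors regroup into V. *)

lemma prod_lessThan_add:
  fixes g :: "nat \<Rightarrow> 'a::comm_monoid_mult"
  shows "(\<Prod>i<m + k. g i) = (\<Prod>i<m. g i) * (\<Prod>i<k. g (m + i))"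
  using prod.atLeastLessThan_concat[of 0 m "m + k" g] prod.shift_bounds_nat_ivl[of g 0 m k]
  by (simp add: atLeast0LessThan add.commute)

lemma prod_upper_pairs_add:
  fixes f :: "nat \<Rightarrow> nat \<Rightarrow> 'a::comm_monoid_mult"
  shows "(\<Prod>i<m + k. \<Prod>j\<in>{Suc i..<m + k}. f i j)
       = (\<Prod>i<m. \<Prod>j\<in>{Suc i..<m}. f i j) * (\<Prod>i<m. \<Prod>j<k. f i (m + j))
         * (\<Prod>i<k. \<Prod>j\<in>{Suc i..<k}. f (m + i) (m + j))"
proof -
  have lower: "(\<Prod>j\<in>{Suc i..<m + k}. f i j) = (\<Prod>j\<in>{Suc i..<m}. f i j) * (\<Prod>j<k. f i (m + j))"
    if "i < m" for i
    using that prod.atLeastLessThan_concat[of "Suc i" m "m + k" "f i"]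
      prod.shift_bounds_nat_ivl[of "f i" 0 m k]
    by (simp add: atLeast0LessThan add.commute)
  have upper: "(\<Prod>j\<in>{Suc (m + i)..<m + k}. f (m + i) j) = (\<Prod>j\<in>{Suc i..<k}. f (m + i) (m + j))" for i
    using prod.shift_bounds_nat_ivl[of "f (m + i)" "Suc i" m k] by (simp add: add.commute)
  show ?thesis
    by (simp add: prod_lessThan_add lower upper prod.distrib mult.assoc)
qed

lemma prod_square_eq_upper_pairs:
  fixes f :: "nat \<Rightarrow> nat \<Rightarrow> 'a::comm_monoid_mult"
  shows "(\<Prod>i<n. \<Prod>j<n. f i j) = (\<Prod>i<n. \<Prod>j\<in>{Suc i..<n}. f i j * f j i) * (\<Prod>i<n. f i i)"
proof (induction n)
  case 0
  show ?case by simp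
next
  case (Suc n)
  have "(\<Prod>i<Suc n. \<Prod>j<Suc n. f i j)
      = (\<Prod>i<n. \<Prod>j<n. f i j) * (\<Prod>i<n. f i n) * (\<Prod>j<n. f n j) * f n n"
    by (simp add: prod.distrib ac_simps)
  then show ?case
    by (simp add: Suc.IH prod.distrib prod.atLeastLessThan_Suc ac_simps)
qed

lemma det_scale_rows:
  fixes c :: "nat \<Rightarrow> 'a::comm_ring_1"
  shows "det (mat N N (\<lambda>(i, j). c i * f i j)) = (\<Prod>i<N. c i) * det (mat N N (\<lambda>(i, j). f i j))"
proof -
  have "mat N N (\<lambda>(i, j). c i * f i j) = mat\<^sub>r N N (\<lambda>i. c i \<cdot>\<^sub>v vec N (f i))"
    by (rule eq_matI) auto
  moreover have "mat N N (\<lambda>(i, j). f i j) = mat\<^sub>r N N (\<lambda>i. vec N (f i))"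
    by (rule eq_matI) auto
  ultimately show ?thesis
    by (simp add: det_rows_mul atLeast0LessThan)
qed

lemma det_vandermonde_Suc:
  fixes z :: "nat \<Rightarrow> 'a::comm_ring_1"
  shows "det (mat (Suc N) (Suc N) (\<lambda>(i, j). z i ^ (Suc N - Suc j)))
       = (\<Prod>i<N. z i - z N) * det (mat N N (\<lambda>(i, j). z i ^ (N - Suc j)))"
proof -
  define V where "V = mat (Suc N) (Suc N) (\<lambda>(i, j). z i ^ (Suc N - Suc j))"
  \<comment> \<open>Subtracting \<open>z N\<close> times column \<open>j + 1\<close> from column \<open>j\<close> clears the last row up to its final 1.\<close>
  define E where "E = mat (Suc N) (Suc N) (\<lambda>(k, j). if k = j then 1 else if k = Suc j then - z N else 0)"
  define W where "W = mat (Suc N) (Suc N) (\<lambda>(i, j). if j < N then (z i - z N) * z i ^ (N - Suc j) else 1)"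
  have V: "V \<in> carrier_mat (Suc N) (Suc N)" and E: "E \<in> carrier_mat (Suc N) (Suc N)"
    by (auto simp: V_def E_def)
  have "det E = prod_list (diag_mat E)"
    by (rule det_lower_triangular[OF _ E]) (auto simp: E_def)
  then have det_E: "det E = 1"
    by (simp add: prod_list_diag_prod E_def)
  have "V * E = W"
  proof (rule eq_matI)
    fix i j assume "i < dim_row W" "j < dim_col W"
    then have i: "i < Suc N" and j: "j < Suc N" by (auto simp: W_def)
    have "(V * E) $$ (i, j) = (\<Sum>k<Suc N. (if k = j then z i ^ (Suc N - Suc k) else 0)
        + (if k = Suc j then - z N * z i ^ (Suc N - Suc k) else 0))"
      using i j V E by (auto simp: scalar_prod_def V_def E_def lessThan_atLeast0 intro!: sum.cong)
    also have "\<dots> = z i ^ (Suc N - Suc j) + (if j < N then - z N * z i ^ (N - Suc j) else 0)"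
      using j by (simp add: sum.distrib)
    also have "\<dots> = W $$ (i, j)"
      using i j by (cases "j < N") (auto simp: W_def Suc_diff_Suc algebra_simps simp flip: power_Suc)
    finally show "(V * E) $$ (i, j) = W $$ (i, j)" .
  qed (auto simp: V_def E_def W_def)
  have minor: "mat_delete W N N = mat N N (\<lambda>(i, j). (z i - z N) * z i ^ (N - Suc j))"
    by (rule eq_matI) (auto simp: mat_delete_def W_def)
  have "det V = det W"
    using \<open>V * E = W\<close> det_mult[OF V E] det_E by simp
  also have "\<dots> = (\<Sum>j<Suc N. W $$ (N, j) * cofactor W N j)"
    by (rule laplace_expansion_row) (auto simp: W_def)
  also have "\<dots> = cofactor W N N"
    by (simp add: W_def)
  finally show ?thesis
    by (simp add: V_def cofactor_def minor det_scale_rows)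
qed

lemma det_vandermonde:
  fixes z :: "nat \<Rightarrow> 'a::comm_ring_1"
  shows "det (mat N N (\<lambda>(i, j). z i ^ (N - Suc j))) = (\<Prod>i<N. \<Prod>j\<in>{Suc i..<N}. z i - z j)"
proof (induction N)
  case 0
  show ?case by (simp add: det_dim_zero)
next
  case (Suc N)
  show ?case
    unfolding det_vandermonde_Suc Suc.IH
    by (simp add: prod.atLeastLessThan_Suc prod.distrib mult.commute)
qed

definition reverse_block :: "nat \<Rightarrow> nat \<Rightarrow> nat \<Rightarrow> nat" where
  "reverse_block a m j = (if a \<le> j \<and> j < a + m then 2 * a + m - 1 - j else j)"

lemma det_reverse_col_block:
  fixes A :: "'a::comm_ring_1 mat"
  assumes "A \<in> carrier_mat N N" and "a + m \<le> N"
  shows "det (mat N N (\<lambda>(i, j). A $$ (i, reverse_block a m j))) = (-1) ^ (m * (m - 1) div 2) * det A"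
  using assms
proof (induction m arbitrary: a A rule: less_induct)
  case (less m)
  show ?case
  proof (cases "m < 2")
    case True
    then have "reverse_block a m j = j" for j
      by (auto simp: reverse_block_def)
    then have "mat N N (\<lambda>(i, j). A $$ (i, reverse_block a m j)) = A"
      using less.prems by (intro eq_matI) auto
    moreover have "m * (m - 1) div 2 = 0"
      using True by (cases m) auto
    ultimately show ?thesis
      by simp
  next
    case False
    then obtain k where m: "m = k + 2"
      by (metis add.commute le_Suc_ex not_less)
    \<comment> \<open>Swapping the two outer columns of the block leaves a reversal of the inner \<open>k\<close> columns.\<close>
    define A' where "A' = swapcols a (a + k + 1) A"
    have A': "A' \<in> carrier_mat N N"
      using less.prems by (simp add: A'_def)
    have sign: "m * (m - 1) div 2 = k * (k - 1) div 2 + (2 * k + 1)"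
      unfolding m by (cases k) (auto simp: algebra_simps)
    have "mat N N (\<lambda>(i, j). A $$ (i, reverse_block a m j))
        = mat N N (\<lambda>(i, j). A' $$ (i, reverse_block (a + 1) k j))"
      using less.prems unfolding A'_def m reverse_block_def by (intro eq_matI) auto
    then have "det (mat N N (\<lambda>(i, j). A $$ (i, reverse_block a m j)))
        = (-1) ^ (k * (k - 1) div 2) * det A'"
      using m less.prems A' by (simp add: less.IH)
    also have "det A' = - det A"
      unfolding A'_def using m less.prems by (intro det_swapcols) auto
    finally show ?thesis
      unfolding sign by (simp add: power_add)
  qed
qed

lemma betar_mod:
  assumes "1 \<le> j" and "j \<le> nr t n lam r"
  shows "betar t n lam r j mod t = r"
proof -
  have "j - 1 < length (betas t n lam r)"
    using assms by (simp add: nr_def)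
  then have "betar t n lam r j \<in> set (betas t n lam r)"
    unfolding betar_def by (rule nth_mem)
  then show ?thesis
    unfolding betas_def set_filter by blast
qed

lemma of_nat_mult_betar_div:
  assumes "1 \<le> j" and "j \<le> nr t n lam r"
  shows "int t * int (betar t n lam r j div t) = int (betar t n lam r j) - int r"
  using div_mult_mod_eq[of "betar t n lam r j" t] betar_mod[OF assms]
  by (metis add_diff_cancel_right' mult.commute of_nat_add of_nat_mult)

lemma rho_star_exponent_left_block:
  assumes "j < nr t n lam q"
  shows "int t * (rho_star t n lam p q (j + 1) + int (nr t n lam p + nr t n lam q) - int (j + 1))
       = int t * (tquot t n lam p 1 + int (nr t n lam p)) + (int (betar t n lam q (j + 1)) - int q)"
proof -
  have "rho_star t n lam p q (j + 1) + int (nr t n lam p + nr t n lam q) - int (j + 1)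
      = tquot t n lam p 1 + int (nr t n lam p) + int (betar t n lam q (j + 1) div t)"
    using assms by (simp add: rho_star_def tquot_def)
  then show ?thesis
    using of_nat_mult_betar_div[of "j + 1" t n lam q] assms by (simp add: algebra_simps)
qed

lemma rho_star_exponent_right_block:
  assumes "nr t n lam q \<le> j" and "j < nr t n lam p + nr t n lam q"
  shows "int t * (rho_star t n lam p q (j + 1) + int (nr t n lam p + nr t n lam q) - int (j + 1))
       = int t * (tquot t n lam p 1 + int (nr t n lam p))
         - (int (betar t n lam p (nr t n lam p + nr t n lam q - j)) + int t - int p)"
proof -
  define k where "k = nr t n lam p + nr t n lam q - j"
  have k: "1 \<le> k" "k \<le> nr t n lam p" "nr t n lam p + nr t n lam q + 1 - (j + 1) = k"
    using assms by (auto simp: k_def)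
  have "rho_star t n lam p q (j + 1) + int (nr t n lam p + nr t n lam q) - int (j + 1)
      = tquot t n lam p 1 + int (nr t n lam p) - int (betar t n lam p k div t) - 1"
    using assms k by (simp add: rho_star_def tquot_def k_def)
  then have "int t * (rho_star t n lam p q (j + 1) + int (nr t n lam p + nr t n lam q) - int (j + 1))
      = int t * (tquot t n lam p 1 + int (nr t n lam p) - int (betar t n lam p k div t) - 1)"
    by (rule arg_cong)
  then show ?thesis
    using of_nat_mult_betar_div[OF k(1,2)] by (simp add: k_def right_diff_distrib)
qed

definition row_var :: "nat \<Rightarrow> (nat \<Rightarrow> 'a::field) \<Rightarrow> 'a \<Rightarrow> nat \<Rightarrow> 'a" where
  "row_var n x y i = (if i < n then x (i + 1) else if i < 2 * n then inverse (x (i - n + 1)) else y)"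

lemma vars_t_eq_row_var_power: "vars_t t n x y i = row_var n x y i ^ t"
  by (simp add: vars_t_def row_var_def)

lemma row_var_nonzero:
  assumes "\<And>i. i \<in> {1..n} \<Longrightarrow> x i \<noteq> 0" and "y \<noteq> 0" and "i < 2 * n + 1"
  shows "row_var n x y i \<noteq> 0"
  using assms by (auto simp: row_var_def)

lemma prod_row_var_powi:
  assumes "\<And>i. i \<in> {1..n} \<Longrightarrow> x i \<noteq> 0"
  shows "(\<Prod>i<2 * n + 1. row_var n x y i powi k) = y powi k"
proof -
  have "row_var n x y i powi k * row_var n x y (n + i) powi k = 1" if "i < n" for i
    using that assms[of "i + 1"] by (simp add: row_var_def power_int_inverse)
  then have "(\<Prod>i<n. row_var n x y i powi k) * (\<Prod>i<n. row_var n x y (n + i) powi k) = 1"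
    by (simp add: prod.distrib[symmetric])
  then show ?thesis
    unfolding mult_2 prod_lessThan_add by (simp add: row_var_def)
qed

lemma Vprod_eq_upper_pairs:
  "Vprod t n x y = (\<Prod>i<2 * n + 1. \<Prod>j\<in>{Suc i..<2 * n + 1}. vars_t t n x y i - vars_t t n x y j)"
proof -
  define a where "a i = x (Suc i) ^ t" for i
  define b where "b i = inverse (x (Suc i)) ^ t" for i
  have shift: "(\<Prod>j\<in>{Suc m..n}. h j) = (\<Prod>j\<in>{m..<n}. h (Suc j))" for m and h :: "nat \<Rightarrow> 'a"
    using prod.atLeast_Suc_lessThan_Suc_shift[of h m n] by (simp add: atLeastLessThanSuc_atLeastAtMost comp_def)
  have "(\<Prod>i<2 * n + 1. \<Prod>j\<in>{Suc i..<2 * n + 1}. vars_t t n x y i - vars_t t n x y j)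
      = (\<Prod>i<n. \<Prod>j\<in>{Suc i..<n}. a i - a j) * (\<Prod>i<n. \<Prod>j<n. a i - b j)
        * (\<Prod>i<n. \<Prod>j\<in>{Suc i..<n}. b i - b j) * (\<Prod>i<n. a i - y ^ t) * (\<Prod>i<n. b i - y ^ t)"
    unfolding mult_2 prod_upper_pairs_add prod_lessThan_add
    by (simp add: vars_t_def a_def b_def ac_simps)
  also have "\<dots> = Vprod t n x y"
    unfolding prod_square_eq_upper_pairs Vprod_def Suc_eq_plus1[symmetric] One_nat_def
    by (simp add: shift atLeast0LessThan prod.distrib a_def b_def ac_simps)
  finally show ?thesis ..
qed

lemma block_mat_entry:
  assumes "i < 2 * n + 1" and "j < 2 * n + 1"
  shows "block_mat t n lam p q x y $$ (i, j) =
    (if j < nr t n lam q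
     then row_var n x y i powi (int (betar t n lam q (j + 1)) - int q)
     else inverse (row_var n x y i) powi (int (betar t n lam p (j - nr t n lam q + 1)) + int t - int p))"
  using assms by (simp add: block_mat_def row_var_def Let_def)

lemma schur_numerator_entry:
  fixes x :: "nat \<Rightarrow> 'a::field"
  assumes sum: "nr t n lam p + nr t n lam q = 2 * n + 1"
    and i: "i < 2 * n + 1" and j: "j < 2 * n + 1" and nonzero: "row_var n x y i \<noteq> 0"
  shows "vars_t t n x y i powi (rho_star t n lam p q (j + 1) + int (2 * n + 1) - int (j + 1))
       = row_var n x y i powi (int t * (tquot t n lam p 1 + int (nr t n lam p)))
         * block_mat t n lam p q x y $$ (i, reverse_block (nr t n lam q) (nr t n lam p) j)"
    (is "?lhs = ?w powi ?e * _")
proof -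
  have lhs: "?lhs = ?w powi (int t * (rho_star t n lam p q (j + 1)
      + int (nr t n lam p + nr t n lam q) - int (j + 1)))"
    unfolding vars_t_eq_row_var_power power_int_power sum ..
  show ?thesis
  proof (cases "j < nr t n lam q")
    case True
    have "?lhs = ?w powi (?e + (int (betar t n lam q (j + 1)) - int q))"
      unfolding lhs rho_star_exponent_left_block[OF True] ..
    also have "\<dots> = ?w powi ?e * ?w powi (int (betar t n lam q (j + 1)) - int q)"
      using nonzero by (simp add: power_int_add)
    finally show ?thesis
      using True i j by (simp add: block_mat_entry reverse_block_def)
  next
    case False
    define k where "k = nr t n lam p + nr t n lam q - j"
    define j' where "j' = reverse_block (nr t n lam q) (nr t n lam p) j"
    have j': "\<not> j' < nr t n lam q" "j' < 2 * n + 1" "j' - nr t n lam q + 1 = k"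
      using False j sum by (auto simp: reverse_block_def j'_def k_def)
    have "?lhs = ?w powi (?e + - (int (betar t n lam p k) + int t - int p))"
      unfolding lhs rho_star_exponent_right_block[OF leI[OF False] j[folded sum]] k_def
      by (rule arg_cong[OF diff_conv_add_uminus])
    also have "\<dots> = ?w powi ?e * ?w powi (- (int (betar t n lam p k) + int t - int p))"
      using nonzero by (rule power_int_add[OF disjI1])
    also have "?w powi (- (int (betar t n lam p k) + int t - int p))
        = inverse ?w powi (int (betar t n lam p k) + int t - int p)"
      by (simp only: power_int_minus power_int_inverse)
    finally show ?thesis
      using i j' by (simp add: block_mat_entry flip: j'_def)
  qed
qed

lemma det_schur_numerator:
  fixes x :: "nat \<Rightarrow> 'a::field"
  assumes sum: "nr t n lam p + nr t n lam q = 2 * n + 1"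
    and x: "\<And>i. i \<in> {1..n} \<Longrightarrow> x i \<noteq> 0" and y: "y \<noteq> 0"
  shows "det (mat (2 * n + 1) (2 * n + 1) (\<lambda>(i, j).
           vars_t t n x y i powi (rho_star t n lam p q (j + 1) + int (2 * n + 1) - int (j + 1))))
       = y powi (int t * (tquot t n lam p 1 + int (nr t n lam p)))
         * ((-1) ^ (nr t n lam p * (nr t n lam p - 1) div 2) * det (block_mat t n lam p q x y))"
proof -
  define N where "N = 2 * n + 1"
  define e where "e = int t * (tquot t n lam p 1 + int (nr t n lam p))"
  define B where "B = block_mat t n lam p q x y"
  define \<sigma> where "\<sigma> = reverse_block (nr t n lam q) (nr t n lam p)"
  have B: "B \<in> carrier_mat N N"
    by (simp add: B_def block_mat_def N_def)
  have entry: "vars_t t n x y i powi (rho_star t n lam p q (j + 1) + int N - int (j + 1))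
      = row_var n x y i powi e * B $$ (i, \<sigma> j)"
    if "i < N" and "j < N" for i j
    using that unfolding N_def e_def B_def \<sigma>_def
    by (rule schur_numerator_entry[OF sum]) (use row_var_nonzero[of n x y] x y that in \<open>auto simp: N_def\<close>)
  have "mat N N (\<lambda>(i, j). vars_t t n x y i powi (rho_star t n lam p q (j + 1) + int N - int (j + 1)))
      = mat N N (\<lambda>(i, j). row_var n x y i powi e * B $$ (i, \<sigma> j))"
    by (rule cong_mat) (simp_all only: case_prod_conv entry)
  moreover have "det (mat N N (\<lambda>(i, j). row_var n x y i powi e * B $$ (i, \<sigma> j)))
      = (\<Prod>i<N. row_var n x y i powi e) * det (mat N N (\<lambda>(i, j). B $$ (i, \<sigma> j)))"
    by (rule det_scale_rows[where c = "\<lambda>i. row_var n x y i powi e" and f = "\<lambda>i j. B $$ (i, \<sigma> j)"])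
  moreover have "(\<Prod>i<N. row_var n x y i powi e) = y powi e"
    unfolding N_def by (rule prod_row_var_powi[OF x])
  moreover have "det (mat N N (\<lambda>(i, j). B $$ (i, \<sigma> j)))
      = (-1) ^ (nr t n lam p * (nr t n lam p - 1) div 2) * det B"
    unfolding \<sigma>_def by (rule det_reverse_col_block[OF B]) (use sum in \<open>simp add: N_def\<close>)
  ultimately show ?thesis
    by (simp only: N_def e_def B_def)
qed

lemma det_schur_denominator:
  "det (mat (2 * n + 1) (2 * n + 1) (\<lambda>(i, j). vars_t t n x y i ^ (2 * n + 1 - (j + 1))))
   = Vprod t n x y"
  unfolding Vprod_eq_upper_pairs Suc_eq_plus1[symmetric] det_vandermonde ..

theorem lemma3p11:
  fixes t n p q :: nat and lam :: "nat \<Rightarrow> nat"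
    and x :: "nat \<Rightarrow> 'a::field" and y :: 'a
  assumes "t \<ge> 2" and "n \<ge> 1"
    and "\<And>i. i \<ge> 1 \<Longrightarrow> lam (i + 1) \<le> lam i"
    and "\<And>i. i > t * n + 1 \<Longrightarrow> lam i = 0"
    and "p \<le> t - 1" and "q \<le> t - 1"
    and "nr t n lam p + nr t n lam q = 2 * n + 1"
    and "\<And>i. i \<in> {1..n} \<Longrightarrow> x i \<noteq> 0" and "y \<noteq> 0"
  shows "schur (2 * n + 1) (rho_star t n lam p q) (vars_t t n x y)
       = (-1) ^ (nr t n lam p * (nr t n lam p - 1) div 2)
         * y powi (int t * (tquot t n lam p 1 + int (nr t n lam p)))
         / Vprod t n x y
         * det (block_mat t n lam p q x y)"
  unfolding schur_def det_schur_denominator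
  by (subst det_schur_numerator[OF assms(7)]) (simp_all add: assms(8,9) ac_simps)

end
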